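(* For every $m\in\mathbb{N}$ and every real $t$ with $|t|<1$, \[ \left(\frac{\arcsin t}{t}\right)^{m}=1+\sum_{k=1}^{\infty}(-1)^k\frac{Q(m,2k;2)}{\binom{m+2k}{m}}\frac{(2t)^{2k}}{(2k)!}, \] where the left-hand side is defined to be $1$ at $t=0$.
   Context: $s(n,k)$ ($n\ge k\ge 0$) denotes the signed Stirling numbers of the first kind, defined by $\frac{[\ln(1+x)]^k}{k!}=\sum_{n=k}^\infty s(n,k)\frac{x^n}{n!}$ for $|x|<1$; equivalently $\prod_{j=0}^{n-1}(z-j)=\sum_{k=0}^n s(n,k)z^k$. For $m\in\mathbb{N}$, $k\in\mathbb{N}_0$ and $\alpha\in\mathbb{R}$ define \[ Q(m,k;\alpha)=\sum_{\ell=0}^{k}\binom{m+\ell-1}{m-1}\, s(m+k-1,m+\ell-1)\left(\frac{m+k-\alpha}{2}\right)^{\ell}, \] with the convention $0^0=1$. *)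

theory Defs
  imports "HOL-Analysis.Analysis" "HOL-Combinatorics.Stirling"
begin

definition stirling1s :: "nat \<Rightarrow> nat \<Rightarrow> real" where
  "stirling1s n k = (-1) ^ (n - k) * real (stirling n k)"

definition Q :: "nat \<Rightarrow> nat \<Rightarrow> real \<Rightarrow> real" where
  "Q m k \<alpha> = (\<Sum>l = 0..k. real ((m + l - 1) choose (m - 1))
       * stirling1s (m + k - 1) (m + l - 1) * ((real (m + k) - \<alpha>) / 2) ^ l)"

end

theory Submission
  imports Defs
begin

text \<open>
  The power series \<open>y = \<Sum>\<^sub>j a\<^sub>m(j) t\<^sup>j\<close> of \<open>arcsin(t)\<^sup>m\<close> is governed by
  \<open>(1 - t\<^sup>2) y'' - t y' = m(m-1) arcsin(t)\<^sup>m\<^sup>-\<^sup>2\<close>, i.e. by the recurrence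
  \<open>(j+2)(j+1) a\<^sub>m(j+2) = j\<^sup>2 a\<^sub>m(j) + m(m-1) a\<^sub>m\<^sub>-\<^sub>2(j)\<close>.
  The number \<open>Q(m,k;2)\<close> is the coefficient of \<open>x\<^sup>m\<^sup>-\<^sup>1\<close> in the centred falling factorial
  \<open>T\<^sub>N(x) = \<Prod>\<^sub>j\<^sub><\<^sub>N (x + (N-1)/2 - j)\<close> with \<open>N = m+k-1\<close>, and the factorisation
  \<open>T\<^sub>N\<^sub>+\<^sub>2 = (x\<^sup>2 - (N+1)\<^sup>2/4) T\<^sub>N\<close> turns this into exactly the above recurrence
  for the numbers \<open>(-4)\<^sup>n m!/(m+2n)! Q(m,2n;2)\<close>. These are bounded by \<open>m!\<close>, so their series
  converges on \<open>(-1,1)\<close>; it satisfies the same differential equation and initial conditions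
  as \<open>arcsin(t)\<^sup>m\<close>, and the first integral \<open>\<surd>(1-t\<^sup>2) y' - m arcsin(t)\<^sup>m\<^sup>-\<^sup>1\<close> identifies
  the two by induction on \<open>m\<close>.
\<close>

lemma Q_0: "Q m 0 \<alpha> = 1"
  by (simp add: Q_def stirling1s_def)

definition centered_ffact_poly :: "nat \<Rightarrow> real poly" where
  "centered_ffact_poly N = (\<Prod>j<N. [:(real N - 1) / 2 - real j, 1:])"

text \<open>The roots of \<open>T\<^sub>N\<^sub>+\<^sub>2\<close> are those of \<open>T\<^sub>N\<close> together with \<open>\<plusminus>(N+1)/2\<close>.\<close>

lemma centered_ffact_poly_add_2:
  "centered_ffact_poly (N + 2) = [:- ((real N + 1)^2 / 4), 0, 1:] * centered_ffact_poly N"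
proof -
  define g where "g j = [:(real N + 1) / 2 - real j, 1:]" for j
  have "centered_ffact_poly (N + 2) = (\<Prod>j<Suc (Suc N). g j)"
    by (simp add: centered_ffact_poly_def g_def add_ac)
  also have "\<dots> = (g 0 * g (Suc N)) * (\<Prod>j<N. g (Suc j))"
    unfolding prod.lessThan_Suc[of _ "Suc N"] prod.lessThan_Suc_shift[of _ N] by (simp only: ac_simps)
  also have "g 0 * g (Suc N) = [:- ((real N + 1)^2 / 4), 0, 1:]"
    by (simp add: g_def power2_eq_square field_simps)
  also have "(\<Prod>j<N. g (Suc j)) = centered_ffact_poly N"
    unfolding centered_ffact_poly_def g_def by (intro prod.cong) (simp_all add: field_simps)
  finally show ?thesis .
qed

lemma prod_diff_of_nat_eq_stirling1s:
  fixes x :: real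
  shows "(\<Prod>j<N. x - real j) = (\<Sum>k\<le>N. stirling1s N k * x ^ k)"
proof -
  have "(\<Prod>j<N. x - real j) = (-1) ^ N * pochhammer (-x) N"
    by (induction N) (simp_all add: pochhammer_Suc algebra_simps)
  also have "\<dots> = (\<Sum>k\<le>N. (-1) ^ N * real (stirling N k) * (-x) ^ k)"
    by (simp add: sum_distrib_left mult.assoc flip: stirling_pochhammer)
  also have "\<dots> = (\<Sum>k\<le>N. stirling1s N k * x ^ k)"
  proof (intro sum.cong refl)
    fix k assume "k \<in> {..N}"
    then have "(-1::real) ^ N = (-1) ^ (N - k) * (-1) ^ k"
      by (simp flip: power_add)
    then show "(-1) ^ N * real (stirling N k) * (-x) ^ k = stirling1s N k * x ^ k"
      by (simp add: stirling1s_def power_minus[of x])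
  qed
  finally show ?thesis .
qed

lemma coeff_centered_ffact_poly:
  "coeff (centered_ffact_poly N) i
     = (\<Sum>k\<le>N. stirling1s N k * real (k choose i) * ((real N - 1) / 2) ^ (k - i))"
proof -
  have "centered_ffact_poly N = (\<Sum>k\<le>N. smult (stirling1s N k) ([:(real N - 1) / 2, 1:] ^ k))"
  proof (rule poly_ext)
    fix w
    have "poly (centered_ffact_poly N) w = (\<Prod>j<N. (w + (real N - 1) / 2) - real j)"
      unfolding centered_ffact_poly_def by (simp add: poly_prod algebra_simps)
    then show "poly (centered_ffact_poly N) w
        = poly (\<Sum>k\<le>N. smult (stirling1s N k) ([:(real N - 1) / 2, 1:] ^ k)) w"
      by (simp add: prod_diff_of_nat_eq_stirling1s poly_sum algebra_simps)
  qed
  moreover have "coeff ([:a, 1:] ^ k) i = real (k choose i) * a ^ (k - i)" for a k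
    by (cases "i \<le> k") (simp_all add: coeff_linear_poly_power coeff_eq_0 degree_power_eq)
  ultimately show ?thesis
    by (simp add: coeff_sum mult.assoc)
qed

lemma Q_eq_coeff_centered_ffact_poly:
  assumes "m \<ge> 1"
  shows "Q m k 2 = coeff (centered_ffact_poly (m + k - 1)) (m - 1)"
proof -
  define N where "N = m + k - 1"
  define g where "g i = stirling1s N i * real (i choose (m - 1)) * ((real N - 1) / 2) ^ (i - (m - 1))" for i
  have "coeff (centered_ffact_poly N) (m - 1) = (\<Sum>i\<le>N. g i)"
    unfolding coeff_centered_ffact_poly g_def ..
  also have "\<dots> = (\<Sum>i = 0 + (m - 1)..k + (m - 1). g i)"
    by (rule sum.mono_neutral_right) (use assms in \<open>auto simp: g_def N_def\<close>)
  also have "\<dots> = (\<Sum>l = 0..k. g (l + (m - 1)))"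
    by (rule sum.shift_bounds_cl_nat_ivl)
  also have "\<dots> = Q m k 2"
    unfolding Q_def using assms
    by (intro sum.cong refl) (simp add: g_def N_def algebra_simps of_nat_diff)
  finally show ?thesis by (simp add: N_def)
qed

lemma coeff_monic_quadratic_mult:
  fixes p :: "'a :: comm_ring_1 poly"
  shows "coeff ([:a, 0, 1:] * p) i = a * coeff p i + (if i \<ge> 2 then coeff p (i - 2) else 0)"
  by (cases i; cases "i - 1") (auto simp: coeff_pCons numeral_eq_Suc)

lemma Q_add_2:
  assumes "m \<ge> 1"
  shows "Q m (k + 2) 2 = (if m \<ge> 3 then Q (m - 2) (k + 2) 2 else 0) - real (m + k)^2 / 4 * Q m k 2"
proof -
  define N where "N = m + k - 1"
  have "m + (k + 2) - 1 = N + 2" using assms by (simp add: N_def)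
  then have "Q m (k + 2) 2 = coeff ([:- ((real N + 1)^2 / 4), 0, 1:] * centered_ffact_poly N) (m - 1)"
    using assms by (simp only: Q_eq_coeff_centered_ffact_poly centered_ffact_poly_add_2)
  also have "\<dots> = (if m \<ge> 3 then coeff (centered_ffact_poly N) (m - 3) else 0)
      - (real N + 1)^2 / 4 * coeff (centered_ffact_poly N) (m - 1)"
    unfolding coeff_monic_quadratic_mult by (auto simp: numeral_eq_Suc)
  also have "\<dots> = (if m \<ge> 3 then Q (m - 2) (k + 2) 2 else 0) - real (m + k)^2 / 4 * Q m k 2"
    using assms Q_eq_coeff_centered_ffact_poly[of "m - 2" "k + 2"]
    by (auto simp: Q_eq_coeff_centered_ffact_poly N_def of_nat_diff Suc_diff_Suc numeral_eq_Suc)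
  finally show ?thesis .
qed

text \<open>The case \<open>m = 0\<close> is separate: \<open>Q\<close> is only meaningful for \<open>m \<ge> 1\<close>, while the recurrence
  at \<open>m = 2\<close> needs the coefficients of \<open>arcsin(t)\<^sup>0 = 1\<close>.\<close>

definition arcsin_power_coeff :: "nat \<Rightarrow> nat \<Rightarrow> real" where
  "arcsin_power_coeff m j =
     (if m = 0 then of_bool (j = 0)
      else if m \<le> j \<and> even (j - m) then (-4) ^ ((j - m) div 2) * fact m / fact j * Q m (j - m) 2
      else 0)"

lemma arcsin_power_coeff_0_left [simp]: "arcsin_power_coeff 0 j = of_bool (j = 0)"
  by (simp add: arcsin_power_coeff_def)

lemma arcsin_power_coeff_eq_0: "\<not> (m \<le> j \<and> even (j - m)) \<Longrightarrow> arcsin_power_coeff m j = 0"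
  by (auto simp: arcsin_power_coeff_def elim: oddE)

lemma arcsin_power_coeff_diag [simp]: "arcsin_power_coeff m m = 1"
  by (simp add: arcsin_power_coeff_def Q_0)

lemma arcsin_power_coeff_add_double:
  "m \<ge> 1 \<Longrightarrow> arcsin_power_coeff m (m + 2 * n) = (-4) ^ n * fact m / fact (m + 2 * n) * Q m (2 * n) 2"
  by (simp add: arcsin_power_coeff_def)

lemma fact_add_2: "fact (n + 2) = (real n + 2) * (real n + 1) * fact n"
  by (simp add: algebra_simps)

lemma fact_reduce_2: "m \<ge> 2 \<Longrightarrow> fact m = real m * (real m - 1) * fact (m - 2)"
proof -
  assume "m \<ge> 2"
  then have "m = (m - 2) + 2" by simp
  then have "fact m = fact ((m - 2) + 2)" by (rule arg_cong)
  also have "\<dots> = (real (m - 2) + 2) * (real (m - 2) + 1) * fact (m - 2)"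
    by (rule fact_add_2)
  finally show ?thesis using \<open>m \<ge> 2\<close> by (simp add: of_nat_diff)
qed

lemma arcsin_power_coeff_recurrence_aligned:
  assumes "m \<ge> 1" and j: "j = m + 2 * n"
  shows "(real j + 2) * (real j + 1) * arcsin_power_coeff m (j + 2)
    = real j ^ 2 * arcsin_power_coeff m j + real m * (real m - 1) * arcsin_power_coeff (m - 2) j"
proof -
  define Q' where "Q' = (if m \<ge> 3 then Q (m - 2) (2 * n + 2) 2 else 0)"
  define c :: real where "c = (-4) ^ n * fact m / fact j"
  define d where "d = (real j + 2) * (real j + 1)"
  have "d > 0" by (simp add: d_def)
  have "arcsin_power_coeff m (j + 2) = (-4) ^ Suc n * fact m / fact (j + 2) * Q m (2 * n + 2) 2"
    using arcsin_power_coeff_add_double[OF assms(1), of "Suc n"] by (simp add: j)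
  also have "fact (j + 2) = d * (fact j :: real)"
    by (simp only: fact_add_2 d_def)
  finally have "d * arcsin_power_coeff m (j + 2) = -4 * c * Q m (2 * n + 2) 2"
    using \<open>d > 0\<close> by (simp add: c_def)
  also have "Q m (2 * n + 2) 2 = Q' - real j ^ 2 / 4 * Q m (2 * n) 2"
    using Q_add_2[OF assms(1), of "2 * n"] by (simp add: Q'_def j)
  finally have lhs: "d * arcsin_power_coeff m (j + 2)
      = -4 * c * Q' + real j ^ 2 * (c * Q m (2 * n) 2)"
    by (simp add: algebra_simps)
  have "real m * (real m - 1) * arcsin_power_coeff (m - 2) j = -4 * c * Q'"
  proof (cases "m \<ge> 3")
    case True
    then have "j = (m - 2) + 2 * Suc n" by (simp add: j)
    then have "arcsin_power_coeff (m - 2) j = (-4) ^ Suc n * fact (m - 2) / fact j * Q (m - 2) (2 * n + 2) 2"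
      using True arcsin_power_coeff_add_double[of "m - 2" "Suc n"] by simp
    with True show ?thesis by (simp add: c_def Q'_def fact_reduce_2)
  next
    case False
    then have "m = 1 \<or> m = 2" using assms(1) by linarith
    then show ?thesis using j by (auto simp: Q'_def)
  qed
  with lhs show ?thesis
    using arcsin_power_coeff_add_double[OF assms(1), of n] by (simp add: c_def d_def j)
qed

lemma arcsin_power_coeff_recurrence:
  "(real j + 2) * (real j + 1) * arcsin_power_coeff m (j + 2)
    = real j ^ 2 * arcsin_power_coeff m j + real m * (real m - 1) * arcsin_power_coeff (m - 2) j"
proof (cases "m = 0")
  case False
  consider (aligned) n where "j = m + 2 * n" | (initial) "j + 2 = m"
    | (vanishing) "\<not> (m \<le> j + 2 \<and> even (j + 2 - m))"
  proof (cases "m \<le> j + 2 \<and> even (j + 2 - m)")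
    case True
    then obtain r where r: "j + 2 - m = 2 * r" by (meson evenE)
    show thesis
    proof (cases r)
      case 0
      with r True show thesis using initial by simp
    next
      case (Suc n)
      with r True show thesis using aligned[of n] by simp
    qed
  qed
  then show ?thesis
  proof cases
    case aligned
    from False show ?thesis by (intro arcsin_power_coeff_recurrence_aligned[OF _ aligned]) simp
  next
    case initial
    then have "m - 2 = j" by simp
    with initial show ?thesis by (auto simp: arcsin_power_coeff_eq_0 algebra_simps)
  next
    case vanishing
    then have "arcsin_power_coeff m (j + 2) = 0" "arcsin_power_coeff m j = 0"
      by (auto intro!: arcsin_power_coeff_eq_0)
    moreover have "real m * (real m - 1) * arcsin_power_coeff (m - 2) j = 0"
      using False vanishing by (cases "m = 1") (auto intro!: arcsin_power_coeff_eq_0)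
    ultimately show ?thesis by simp
  qed
qed auto

lemma abs_arcsin_power_coeff_le_fact: "\<bar>arcsin_power_coeff m j\<bar> \<le> fact m"
proof (induction m arbitrary: j rule: less_induct)
  case (less m)
  have lower: "\<bar>real m * (real m - 1) * arcsin_power_coeff (m - 2) i\<bar> \<le> fact m" for i
  proof (cases "m \<ge> 2")
    case True
    have "\<bar>arcsin_power_coeff (m - 2) i\<bar> \<le> fact (m - 2)"
      using True less.IH[of "m - 2"] by simp
    with True show ?thesis by (simp add: fact_reduce_2 abs_mult mult_left_mono)
  next
    case False
    then have "m = 0 \<or> m = 1" by auto
    then show ?thesis by auto
  qed
  show ?case
  proof (induction j rule: less_induct)
    case (less j)
    show ?case
    proof (cases "j < 2")
      case True
      then have "arcsin_power_coeff m j = of_bool (m = j)"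
        using less_2_cases[OF True] by (cases "m = j") (auto intro!: arcsin_power_coeff_eq_0 simp: le_Suc_eq)
      then show ?thesis by simp
    next
      case False
      then obtain i where j: "j = i + 2" by (metis add.commute le_add_diff_inverse not_less)
      have "(real i + 2) * (real i + 1) * \<bar>arcsin_power_coeff m j\<bar>
          = \<bar>real i ^ 2 * arcsin_power_coeff m i + real m * (real m - 1) * arcsin_power_coeff (m - 2) i\<bar>"
        unfolding j by (simp flip: arcsin_power_coeff_recurrence add: abs_mult)
      also have "\<dots> \<le> real i ^ 2 * fact m + fact m"
        using less.IH[of i] lower[of i] j
        by (intro order.trans[OF abs_triangle_ineq] add_mono) (auto simp: abs_mult mult_left_mono)
      also have "\<dots> \<le> (real i + 2) * (real i + 1) * fact m"
      proof -
        have "real i ^ 2 + 1 \<le> (real i + 2) * (real i + 1)"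
          by (simp add: power2_eq_square algebra_simps)
        from mult_right_mono[OF this, of "fact m"] show ?thesis by (simp add: algebra_simps)
      qed
      finally show ?thesis
        by (simp add: mult_le_cancel_left_pos add_pos_pos)
    qed
  qed
qed

lemma conv_radius_ge_1_if_bounded:
  fixes f :: "nat \<Rightarrow> 'a :: {banach, real_normed_div_algebra}"
  assumes "\<And>n. norm (f n) \<le> B"
  shows "conv_radius f \<ge> 1"
proof (rule conv_radius_geI_ex')
  fix r :: real assume r: "0 < r" "ereal r < 1"
  have "summable (\<lambda>n. B * r ^ n)"
    using r by (intro summable_mult summable_geometric) auto
  moreover have "norm (f n * of_real r ^ n) \<le> B * r ^ n" for n
    using assms[of n] r by (simp add: norm_mult norm_power mult_right_mono)
  ultimately show "summable (\<lambda>n. f n * of_real r ^ n)"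
    by (rule summable_comparison_test')
qed

definition arcsin_power_fps :: "nat \<Rightarrow> real fps" where
  "arcsin_power_fps m = Abs_fps (arcsin_power_coeff m)"

lemma fps_conv_radius_arcsin_power_fps: "fps_conv_radius (arcsin_power_fps m) \<ge> 1"
  unfolding fps_conv_radius_def arcsin_power_fps_def
  by (rule conv_radius_ge_1_if_bounded[where B = "fact m"]) (simp add: abs_arcsin_power_coeff_le_fact)

lemma arcsin_power_fps_ode:
  "(1 - fps_X^2) * fps_deriv (fps_deriv (arcsin_power_fps m)) - fps_X * fps_deriv (arcsin_power_fps m)
     = fps_const (real m * (real m - 1)) * arcsin_power_fps (m - 2)" (is "?L = ?R")
proof (rule fps_ext)
  fix n
  let ?a = "arcsin_power_coeff m"
  have "fps_nth ?L n = (real n + 2) * (real n + 1) * ?a (n + 2) - real n ^ 2 * ?a n"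
  proof (cases "n < 2")
    case True
    then consider "n = 0" | "n = 1" by linarith
    then show ?thesis
      by cases (simp_all add: fps_X_power_mult_nth arcsin_power_fps_def algebra_simps)
  next
    case False
    then obtain k where "n = k + 2" by (metis add.commute le_add_diff_inverse not_less)
    then show ?thesis
      by (simp add: fps_X_power_mult_nth arcsin_power_fps_def algebra_simps power2_eq_square)
  qed
  also have "\<dots> = fps_nth ?R n"
    using arcsin_power_coeff_recurrence[of n m] by (simp add: arcsin_power_fps_def)
  finally show "fps_nth ?L n = fps_nth ?R n" .
qed

lemma norm_less_fps_conv_radius:
  fixes x :: real
  assumes "\<bar>x\<bar> < 1" and "fps_conv_radius f \<ge> 1"
  shows "norm x < fps_conv_radius f"
proof -
  have "ereal (norm x) < 1" using assms(1) by simp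
  then show ?thesis using assms(2) by (rule less_le_trans)
qed

lemma fps_conv_radius_arcsin_power_fps_derivs:
  "fps_conv_radius (fps_deriv (arcsin_power_fps m)) \<ge> 1"
  "fps_conv_radius (fps_deriv (fps_deriv (arcsin_power_fps m))) \<ge> 1"
  using fps_conv_radius_arcsin_power_fps order.trans[OF _ fps_conv_radius_deriv] by blast+

lemma eval_arcsin_power_fps_ode:
  fixes x :: real
  assumes "\<bar>x\<bar> < 1"
  shows "(1 - x^2) * eval_fps (fps_deriv (fps_deriv (arcsin_power_fps m))) x
      - x * eval_fps (fps_deriv (arcsin_power_fps m)) x
    = real m * (real m - 1) * eval_fps (arcsin_power_fps (m - 2)) x"
proof -
  let ?F = "arcsin_power_fps m"
  have radii: "norm x < fps_conv_radius (fps_deriv (fps_deriv ?F))"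
      "norm x < fps_conv_radius (fps_deriv ?F)"
      "norm x < fps_conv_radius (arcsin_power_fps (m - 2))"
    by (rule norm_less_fps_conv_radius[OF assms],
        rule fps_conv_radius_arcsin_power_fps fps_conv_radius_arcsin_power_fps_derivs)+
  have "eval_fps ((1 - fps_X^2) * fps_deriv (fps_deriv ?F) - fps_X * fps_deriv ?F) x
      = (1 - x^2) * eval_fps (fps_deriv (fps_deriv ?F)) x - x * eval_fps (fps_deriv ?F) x"
  proof -
    have "norm x < fps_conv_radius (1 - fps_X^2 :: real fps)"
      by (rule less_le_trans[OF _ fps_conv_radius_diff]) simp
    moreover from this radii(1) have "norm x < fps_conv_radius ((1 - fps_X^2) * fps_deriv (fps_deriv ?F))"
      by (intro less_le_trans[OF _ fps_conv_radius_mult]) simp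
    moreover from radii(2) have "norm x < fps_conv_radius (fps_X * fps_deriv ?F)"
      by (intro less_le_trans[OF _ fps_conv_radius_mult]) simp
    ultimately show ?thesis
      using radii by (simp add: eval_fps_diff eval_fps_mult)
  qed
  moreover have "eval_fps (fps_const (real m * (real m - 1)) * arcsin_power_fps (m - 2)) x
      = real m * (real m - 1) * eval_fps (arcsin_power_fps (m - 2)) x"
    using radii by (simp add: eval_fps_mult)
  ultimately show ?thesis by (simp only: arcsin_power_fps_ode)
qed

lemma has_real_derivative_sqrt_one_minus_square:
  fixes x :: real
  assumes "\<bar>x\<bar> < 1"
  shows "((\<lambda>x. sqrt (1 - x^2)) has_real_derivative - x / sqrt (1 - x^2)) (at x)"
proof -
  have "((\<lambda>x. 1 - x^2) has_real_derivative - (2 * x)) (at x)"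
    by (auto intro!: derivative_eq_intros)
  from DERIV_chain2[OF DERIV_real_sqrt this] show ?thesis
    using assms abs_square_less_1[of x] by (simp add: field_simps)
qed

lemma has_real_derivative_arcsin_power:
  fixes x :: real
  assumes "\<bar>x\<bar> < 1"
  shows "((\<lambda>x. arcsin x ^ k) has_real_derivative real k * arcsin x ^ (k - 1) / sqrt (1 - x^2)) (at x)"
  using DERIV_power[OF DERIV_arcsin, of x k] assms by (simp add: abs_less_iff divide_inverse ac_simps)

text \<open>\<open>(1 - x\<^sup>2) G'' - x G' = \<surd>(1-x\<^sup>2) (\<surd>(1-x\<^sup>2) G')'\<close>, so \<open>\<psi>\<close> below is a first integral.\<close>

lemma eq_deriv_arcsin_power_if_ode:
  fixes G' G'' :: "real \<Rightarrow> real" and m :: nat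
  assumes "m \<ge> 1"
    and G': "\<And>x. \<bar>x\<bar> < 1 \<Longrightarrow> (G' has_real_derivative G'' x) (at x)"
    and ode: "\<And>x. \<bar>x\<bar> < 1 \<Longrightarrow>
      (1 - x^2) * G'' x - x * G' x = real m * (real m - 1) * arcsin x ^ (m - 2)"
    and "G' 0 = of_bool (m = 1)"
    and "\<bar>x\<bar> < 1"
  shows "G' x = real m * arcsin x ^ (m - 1) / sqrt (1 - x^2)"
proof -
  let ?s = "\<lambda>x. sqrt (1 - x^2)"
  define \<psi> where "\<psi> x = ?s x * G' x - real m * arcsin x ^ (m - 1)" for x
  have "(\<psi> has_real_derivative 0) (at y)" if "y \<in> {-1<..<1}" for y
  proof -
    from that have y: "\<bar>y\<bar> < 1" by auto
    then have s: "?s y > 0" "?s y ^ 2 = 1 - y^2"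
      using abs_square_less_1[of y] by simp_all
    from DERIV_diff[OF DERIV_mult[OF has_real_derivative_sqrt_one_minus_square[OF y] G'[OF y]]
        DERIV_cmult[OF has_real_derivative_arcsin_power[OF y, of "m - 1"], where c = "real m"]]
    have "(\<psi> has_real_derivative (- y / ?s y) * G' y + G'' y * ?s y
        - real m * (real (m - 1) * arcsin y ^ (m - 1 - 1) / ?s y)) (at y)"
      unfolding \<psi>_def .
    moreover have "(- y / ?s y) * G' y + G'' y * ?s y
        - real m * (real (m - 1) * arcsin y ^ (m - 1 - 1) / ?s y)
      = ((1 - y^2) * G'' y - y * G' y - real m * (real m - 1) * arcsin y ^ (m - 2)) / ?s y"
    proof -
      have "(- y / r) * a + b * r - M * (K * A / r) = (r^2 * b - y * a - M * K * A) / r"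
        if "r > 0" for r a b M K A :: real
        using that by (simp add: field_simps power2_eq_square)
      from this[OF s(1)] show ?thesis
        using \<open>m \<ge> 1\<close> by (simp add: s(2) of_nat_diff diff_diff_left flip: numeral_2_eq_2)
    qed
    ultimately show ?thesis by (simp add: ode[OF y])
  qed
  then have "\<psi> x = \<psi> 0"
    using \<open>\<bar>x\<bar> < 1\<close> by (intro DERIV_isconst3[of "-1" 1]) auto
  also have "\<psi> 0 = 0"
    using \<open>G' 0 = of_bool (m = 1)\<close> \<open>m \<ge> 1\<close> by (auto simp: \<psi>_def)
  finally show ?thesis
    using \<open>\<bar>x\<bar> < 1\<close> abs_square_less_1[of x] by (simp add: \<psi>_def field_simps)
qed

lemma eq_arcsin_power_if_ode:
  fixes G G' G'' :: "real \<Rightarrow> real" and m :: nat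
  assumes "m \<ge> 1"
    and G: "\<And>x. \<bar>x\<bar> < 1 \<Longrightarrow> (G has_real_derivative G' x) (at x)"
    and G': "\<And>x. \<bar>x\<bar> < 1 \<Longrightarrow> (G' has_real_derivative G'' x) (at x)"
    and ode: "\<And>x. \<bar>x\<bar> < 1 \<Longrightarrow>
      (1 - x^2) * G'' x - x * G' x = real m * (real m - 1) * arcsin x ^ (m - 2)"
    and "G 0 = 0" and "G' 0 = of_bool (m = 1)"
    and "\<bar>t\<bar> < 1"
  shows "G t = arcsin t ^ m"
proof -
  define \<phi> where "\<phi> x = G x - arcsin x ^ m" for x
  have "(\<phi> has_real_derivative 0) (at x)" if "x \<in> {-1<..<1}" for x
  proof -
    from that have x: "\<bar>x\<bar> < 1" by auto
    show ?thesis
      unfolding \<phi>_def using DERIV_diff[OF G[OF x] has_real_derivative_arcsin_power[OF x, of m]]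
      by (simp add: eq_deriv_arcsin_power_if_ode[OF assms(1) G' ode \<open>G' 0 = of_bool (m = 1)\<close> x])
  qed
  then have "\<phi> t = \<phi> 0"
    using \<open>\<bar>t\<bar> < 1\<close> by (intro DERIV_isconst3[of "-1" 1]) auto
  with \<open>G 0 = 0\<close> \<open>m \<ge> 1\<close> show ?thesis by (simp add: \<phi>_def power_0_left)
qed

lemma eval_arcsin_power_fps:
  fixes t :: real
  assumes "\<bar>t\<bar> < 1"
  shows "eval_fps (arcsin_power_fps m) t = arcsin t ^ m"
  using assms
proof (induction m arbitrary: t rule: less_induct)
  case (less m)
  show ?case
  proof (cases "m = 0")
    case True
    have "arcsin_power_fps 0 = 1" by (rule fps_ext) (simp add: arcsin_power_fps_def)
    with True show ?thesis by simp
  next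
    case False
    let ?F = "arcsin_power_fps m"
    show ?thesis
    proof (rule eq_arcsin_power_if_ode)
      fix x :: real assume x: "\<bar>x\<bar> < 1"
      show "(eval_fps ?F has_real_derivative eval_fps (fps_deriv ?F) x) (at x)"
        "(eval_fps (fps_deriv ?F) has_real_derivative eval_fps (fps_deriv (fps_deriv ?F)) x) (at x)"
        by (rule has_field_derivative_eval_fps, rule norm_less_fps_conv_radius[OF x],
            rule fps_conv_radius_arcsin_power_fps fps_conv_radius_arcsin_power_fps_derivs)+
      have "real m * (real m - 1) * eval_fps (arcsin_power_fps (m - 2)) x
          = real m * (real m - 1) * arcsin x ^ (m - 2)"
        using less.IH[of "m - 2" x] x False by (cases "m = 1") auto
      then show "(1 - x^2) * eval_fps (fps_deriv (fps_deriv ?F)) x - x * eval_fps (fps_deriv ?F) x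
          = real m * (real m - 1) * arcsin x ^ (m - 2)"
        using eval_arcsin_power_fps_ode[OF x, of m] by simp
    qed (use False less.prems in \<open>auto simp: eval_fps_at_0 arcsin_power_fps_def arcsin_power_coeff_def Q_0 le_Suc_eq\<close>)
  qed
qed

lemma arcsin_power_sums:
  fixes t :: real
  assumes "m \<ge> 1" and "\<bar>t\<bar> < 1"
  shows "(\<lambda>n. arcsin_power_coeff m (m + 2 * n) * t ^ (m + 2 * n)) sums arcsin t ^ m"
proof -
  have "(\<lambda>j. fps_nth (arcsin_power_fps m) j * t ^ j) sums eval_fps (arcsin_power_fps m) t"
    by (rule sums_eval_fps[OF norm_less_fps_conv_radius[OF assms(2) fps_conv_radius_arcsin_power_fps]])
  then have "(\<lambda>j. arcsin_power_coeff m j * t ^ j) sums arcsin t ^ m"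
    by (simp only: eval_arcsin_power_fps[OF assms(2)]) (simp add: arcsin_power_fps_def)
  moreover have "strict_mono (\<lambda>n. m + 2 * n)" by (rule strict_monoI) simp
  moreover have "arcsin_power_coeff m j * t ^ j = 0" if "j \<notin> range (\<lambda>n. m + 2 * n)" for j
  proof -
    have "\<not> (m \<le> j \<and> even (j - m))"
    proof
      assume "m \<le> j \<and> even (j - m)"
      then have "j = m + 2 * ((j - m) div 2)" by auto
      with that show False by blast
    qed
    then show ?thesis by (simp add: arcsin_power_coeff_eq_0)
  qed
  ultimately show ?thesis
    using sums_mono_reindex[of "\<lambda>n. m + 2 * n" "\<lambda>j. arcsin_power_coeff m j * t ^ j"] by blast
qed

lemma arcsin_power_term_div_power_eq:
  fixes t :: real
  assumes "m \<ge> 1" and "t \<noteq> 0"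
  shows "arcsin_power_coeff m (m + 2 * n) * t ^ (m + 2 * n) / t ^ m
    = (-1) ^ n * Q m (2 * n) 2 / real ((m + 2 * n) choose m) * (2 * t) ^ (2 * n) / fact (2 * n)"
proof -
  have cancel: "(-1) ^ n * 4 ^ n * M / F * q * T = (-1) ^ n * q / (F / (M * G)) * (4 ^ n * T) / G"
    if "F \<noteq> 0" "M \<noteq> 0" "G \<noteq> 0" for F M G q T :: real
    using that by (simp add: field_simps)
  have "arcsin_power_coeff m (m + 2 * n) * t ^ (m + 2 * n) / t ^ m
      = (-1) ^ n * 4 ^ n * fact m / fact (m + 2 * n) * Q m (2 * n) 2 * t ^ (2 * n)"
    using assms by (simp add: arcsin_power_coeff_add_double power_add flip: power_mult_distrib)
  also have "\<dots> = (-1) ^ n * Q m (2 * n) 2 / (fact (m + 2 * n) / (fact m * fact (2 * n)))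
      * (4 ^ n * t ^ (2 * n)) / fact (2 * n)"
    by (rule cancel) simp_all
  also have "fact (m + 2 * n) / (fact m * fact (2 * n)) = real ((m + 2 * n) choose m)"
    by (subst binomial_fact) auto
  also have "4 ^ n * t ^ (2 * n) = (2 * t) ^ (2 * n)"
    by (simp add: power_mult power_mult_distrib)
  finally show ?thesis .
qed

theorem theorem2p1:
  fixes m :: nat and t :: real
  assumes "m \<ge> 1" and "\<bar>t\<bar> < 1"
  shows "(\<lambda>j. let k = Suc j in
            (-1) ^ k * Q m (2 * k) 2 / real ((m + 2 * k) choose m)
              * (2 * t) ^ (2 * k) / fact (2 * k))
         sums ((if t = 0 then 1 else (arcsin t / t) ^ m) - 1)"
proof -
  define h where "h k = (-1) ^ k * Q m (2 * k) 2 / real ((m + 2 * k) choose m)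
    * (2 * t) ^ (2 * k) / fact (2 * k)" for k
  have "(\<lambda>j. h (Suc j)) sums ((if t = 0 then 1 else (arcsin t / t) ^ m) - 1)"
  proof (cases "t = 0")
    case False
    have "h = (\<lambda>n. arcsin_power_coeff m (m + 2 * n) * t ^ (m + 2 * n) / t ^ m)"
      by (simp add: fun_eq_iff h_def arcsin_power_term_div_power_eq[OF assms(1) False])
    then have "h sums (arcsin t ^ m / t ^ m)"
      using sums_divide[OF arcsin_power_sums[OF assms]] by simp
    moreover have "h 0 = 1" by (simp add: h_def Q_0)
    ultimately show ?thesis
      using False by (simp add: sums_Suc_iff power_divide)
  qed (simp add: h_def)
  then show ?thesis by (simp only: h_def Let_def)
qed

end
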